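(* Let an explicit non-confluent DJ-irreducible Runge--Kutta method $(A,b)$ be given such that at least one entry of the matrix $A$ or of the vector $b$ is negative. Then there exist nonnegative initial data and a choice of nonnegative functions $q_k$ such that the numerical solution of $$u_k'(t)=q_k(u(t),t)\,\frac{u_{k-1}(t)-u_k(t)}{\Delta x},\quad k=1,\dots,N,\qquad u_0:=u_N,$$ obtained with the method includes a negative value. Consequently $\gamma(A,b)=0$.
   Context: An $m$-stage explicit Runge--Kutta method has strictly lower-triangular Butcher matrix $A=(a_{ij})\in\mathbb{R}^{m\times m}$, weight vector $b\in\mathbb{R}^m$ and nodes $c_i=\sum_ja_{ij}$; non-confluent means the $c_i$ are pairwise distinct. It is DJ-reducible if there is a nonempty set $S\subseteq\{1,\dots,m\}$ of stage indices with $b_j=0$ for all $j\in S$ and $a_{ij}=0$ for all $i\notin S$, $j\in S$ (i.e. the stages in $S$ do not affect the result); otherwise DJ-irreducible. Applied to the ODE system with step $\Delta t$: $y^i_k=u^n_k+\sum_{j<i}a_{ij}\xi^j_k(y^j_{k-1}-y^j_k)$, $u^{n+1}_k=u^n_k+\sum_ib_i\xi^i_k(y^i_{k-1}-y^i_k)$, with $\xi^j_k=\frac{\Delta t}{\Delta x}q_k(y^j,t_n+c_j\Delta t)$ and periodic indices. Treating the $\xi^j_\ell$ as independent variables on the grid $\ell\in\mathbb{Z}$, $u^{n+1}_k=\sum_{i=0}^mP_i(\xi)u^n_{k-i}$ for polynomials $P_i$ (independent of $k$) in the $m(m+1)/2$ variables $\xi^j_\ell$, $1\le j\le m$, $k-(m-j)\le\ell\le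 k$. The step-size coefficient is $\gamma(A,b)=\sup\{\delta\ge0:P_i(\xi)\ge0$ for all $0\le i\le m$, all $\xi\in[0,\delta]^{m(m+1)/2}\}$ (or $0$ if the set is empty). *)

theory Defs
  imports "HOL-Analysis.Analysis"
begin

definition rk_explicit :: "nat \<Rightarrow> (nat \<Rightarrow> nat \<Rightarrow> real) \<Rightarrow> bool" where
  "rk_explicit m A \<longleftrightarrow> (\<forall>i\<in>{1..m}. \<forall>j\<in>{1..m}. i \<le> j \<longrightarrow> A i j = 0)"

definition rk_nodes :: "nat \<Rightarrow> (nat \<Rightarrow> nat \<Rightarrow> real) \<Rightarrow> nat \<Rightarrow> real" where
  "rk_nodes m A i = (\<Sum>j=1..m. A i j)"

definition rk_non_confluent :: "nat \<Rightarrow> (nat \<Rightarrow> nat \<Rightarrow> real) \<Rightarrow> bool" where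
  "rk_non_confluent m A \<longleftrightarrow> inj_on (rk_nodes m A) {1..m}"

definition DJ_reducible :: "nat \<Rightarrow> (nat \<Rightarrow> nat \<Rightarrow> real) \<Rightarrow> (nat \<Rightarrow> real) \<Rightarrow> bool" where
  "DJ_reducible m A b \<longleftrightarrow> (\<exists>S. S \<subseteq> {1..m} \<and> S \<noteq> {} \<and> (\<forall>j\<in>S. b j = 0) \<and>
      (\<forall>i\<in>{1..m} - S. \<forall>j\<in>S. A i j = 0))"

definition DJ_irreducible :: "nat \<Rightarrow> (nat \<Rightarrow> nat \<Rightarrow> real) \<Rightarrow> (nat \<Rightarrow> real) \<Rightarrow> bool" where
  "DJ_irreducible m A b \<longleftrightarrow> \<not> DJ_reducible m A b"

text \<open>Stage vectors y^1, ..., y^i (list position j-1 holds y^j) of one RK step for the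
  semi-discretisation on a grid of type 'g with left neighbour map pr; xi j k Y is the
  factor xi^j_k, which may depend on the stage vector Y = y^j.\<close>

primrec rk_stages :: "(nat \<Rightarrow> nat \<Rightarrow> real) \<Rightarrow> ('g \<Rightarrow> 'g) \<Rightarrow> (nat \<Rightarrow> 'g \<Rightarrow> ('g \<Rightarrow> real) \<Rightarrow> real)
    \<Rightarrow> ('g \<Rightarrow> real) \<Rightarrow> nat \<Rightarrow> ('g \<Rightarrow> real) list" where
  "rk_stages A pr xi u 0 = []"
| "rk_stages A pr xi u (Suc i) =
     (let ys = rk_stages A pr xi u i in
      ys @ [(\<lambda>k. u k + (\<Sum>j=1..i. A (Suc i) j * xi j k (ys ! (j - 1))
                 * ((ys ! (j - 1)) (pr k) - (ys ! (j - 1)) k)))])"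

definition rk_step :: "nat \<Rightarrow> (nat \<Rightarrow> nat \<Rightarrow> real) \<Rightarrow> (nat \<Rightarrow> real) \<Rightarrow> ('g \<Rightarrow> 'g)
    \<Rightarrow> (nat \<Rightarrow> 'g \<Rightarrow> ('g \<Rightarrow> real) \<Rightarrow> real) \<Rightarrow> ('g \<Rightarrow> real) \<Rightarrow> ('g \<Rightarrow> real)" where
  "rk_step m A b pr xi u =
     (let ys = rk_stages A pr xi u m in
      (\<lambda>k. u k + (\<Sum>i=1..m. b i * xi i k (ys ! (i - 1))
                 * ((ys ! (i - 1)) (pr k) - (ys ! (i - 1)) k))))"

definition per_prev :: "nat \<Rightarrow> nat \<Rightarrow> nat" where
  "per_prev N k = (if k = 1 then N else k - 1)"

text \<open>One step of the method applied to u_k' = q_k(u,t) (u_{k-1}-u_k)/dx, k = 1..N,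
  from time tn with step dt.  q k v t is q_k(v,t); v is the grid vector (components 1..N,
  zero elsewhere).\<close>

definition ode_rk_step :: "nat \<Rightarrow> (nat \<Rightarrow> nat \<Rightarrow> real) \<Rightarrow> (nat \<Rightarrow> real) \<Rightarrow> nat \<Rightarrow> real \<Rightarrow> real
    \<Rightarrow> real \<Rightarrow> (nat \<Rightarrow> (nat \<Rightarrow> real) \<Rightarrow> real \<Rightarrow> real) \<Rightarrow> (nat \<Rightarrow> real) \<Rightarrow> (nat \<Rightarrow> real)" where
  "ode_rk_step m A b N dx dt tn q u =
     rk_step m A b (per_prev N)
       (\<lambda>j k Y. dt / dx * q k (\<lambda>i. if i \<in> {1..N} then Y i else 0) (tn + rk_nodes m A j * dt)) u"

text \<open>The polynomials P_i, evaluated at given values xi j l of the independent variables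
  xi^j_l on the grid l \<in> \<int> (with k = 0): u^{n+1}_0 = \<Sum>i. P_i(xi) u^n_{-i}, so P_i(xi) is the
  result of the step at k = 0 applied to the unit vector at grid point -i.\<close>

definition rk_P :: "nat \<Rightarrow> (nat \<Rightarrow> nat \<Rightarrow> real) \<Rightarrow> (nat \<Rightarrow> real) \<Rightarrow> nat \<Rightarrow> (nat \<Rightarrow> int \<Rightarrow> real) \<Rightarrow> real" where
  "rk_P m A b i \<xi> = rk_step m A b (\<lambda>l. l - 1) (\<lambda>j l Y. \<xi> j l) (\<lambda>l. if l = - int i then 1 else 0) 0"

definition rk_gamma_set :: "nat \<Rightarrow> (nat \<Rightarrow> nat \<Rightarrow> real) \<Rightarrow> (nat \<Rightarrow> real) \<Rightarrow> real set" where
  "rk_gamma_set m A b = {\<delta>. \<delta> \<ge> 0 \<and> (\<forall>i\<le>m. \<forall>\<xi>.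
      (\<forall>j\<in>{1..m}. \<forall>l\<in>{- int (m - j)..0}. 0 \<le> \<xi> j l \<and> \<xi> j l \<le> \<delta>) \<longrightarrow> rk_P m A b i \<xi> \<ge> 0)}"

definition rk_gamma :: "nat \<Rightarrow> (nat \<Rightarrow> nat \<Rightarrow> real) \<Rightarrow> (nat \<Rightarrow> real) \<Rightarrow> ereal" where
  "rk_gamma m A b = (if rk_gamma_set m A b = {} then 0 else Sup (ereal ` rk_gamma_set m A b))"

end

theory Submission
  imports Defs
begin

text \<open>Expanding one step of the method, the coefficient of \<open>u\<^sup>n\<^sub>k\<^sub>-\<^sub>i\<close> is a sum over strictly
  decreasing chains of stages \<open>j\<^sub>1 > \<dots> > j\<^sub>i\<close> of the products \<open>b(j\<^sub>1) A(j\<^sub>1,j\<^sub>2) \<cdots> A(j\<^sub>i\<^sub>-\<^sub>1,j\<^sub>i)\<close>,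
  each multiplied by the factors \<open>\<xi>\<close> met along the chain.  Making \<open>\<xi>\<close> nonzero only where the stages
  of one fixed chain act isolates that chain; for the ODE such a \<open>\<xi>\<close> is realised by a time-dependent
  \<open>q\<close>, which tells the stages apart because the nodes are distinct.  DJ-irreducibility says that
  every stage is reached by a chain with nonzero coefficient, and appending a negative entry of \<open>A\<close>
  or \<open>b\<close> to such a chain gives a chain with negative coefficient, so \<open>P\<^sub>i < 0\<close> for every \<open>\<delta> > 0\<close>.\<close>

text \<open>The weights \<open>b\<close> become row \<open>m + 1\<close>, so that the update is computed as one more stage.\<close>

definition rk_extended_tableau :: "nat \<Rightarrow> (nat \<Rightarrow> nat \<Rightarrow> real) \<Rightarrow> (nat \<Rightarrow> real) \<Rightarrow> nat \<Rightarrow> nat \<Rightarrow> real" where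
  "rk_extended_tableau m A b i j = (if i = Suc m then b j else A i j)"

fun chain_coeff :: "(nat \<Rightarrow> nat \<Rightarrow> real) \<Rightarrow> nat \<Rightarrow> nat list \<Rightarrow> real" where
  "chain_coeff A j [] = 1"
| "chain_coeff A j (c # cs) = (if c < j then A j c * chain_coeff A c cs else 0)"

lemma chain_coeff_snoc:
  "chain_coeff A j (cs @ [c]) =
     chain_coeff A j cs * (if c < last (j # cs) then A (last (j # cs)) c else 0)"
  by (induction cs arbitrary: j) auto

lemma chain_coeffD:
  "chain_coeff A j cs \<noteq> 0 \<Longrightarrow> distinct cs \<and> (\<forall>c\<in>set cs. c < j)"
proof (induction cs arbitrary: j)
  case (Cons c cs)
  then show ?case by (fastforce split: if_splits)
qed simp

lemma length_rk_stages [simp]: "length (rk_stages A pr xi u n) = n"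
  by (induction n) (simp_all add: Let_def)

lemma rk_stages_along_path:
  fixes p :: "nat \<Rightarrow> 'g" and cs :: "nat list"
  assumes xi: "\<And>j t Y. j \<in> {1..M} \<Longrightarrow> t \<le> length cs \<Longrightarrow>
                  xi j (p t) Y = (if t < length cs \<and> j = cs ! t then x else 0)"
    and cs: "set cs \<subseteq> {1..M}"
    and pr: "\<And>t. t < length cs \<Longrightarrow> pr (p t) = p (Suc t)"
    and u: "\<And>t. t \<le> length cs \<Longrightarrow> u (p t) = (if t = length cs then 1 else 0)"
  shows "n \<le> Suc M \<Longrightarrow> j \<in> {1..n} \<Longrightarrow> t \<le> length cs \<Longrightarrow>
    (rk_stages A pr xi u n ! (j - 1)) (p t) = x ^ (length cs - t) * chain_coeff A j (drop t cs)"
proof (induction n arbitrary: j t)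
  case 0
  then show ?case by simp
next
  case (Suc n)
  let ?y = "\<lambda>i. rk_stages A pr xi u n ! (i - 1)"
  show ?case
  proof (cases "j = Suc n")
    case False
    with Suc.prems have "j - 1 < n" by auto
    then show ?thesis using Suc by (simp add: Let_def nth_append)
  next
    case True
    have "(rk_stages A pr xi u (Suc n) ! (j - 1)) (p t) =
        u (p t) + (\<Sum>i=1..n. A (Suc n) i * xi i (p t) (?y i) * (?y i (pr (p t)) - ?y i (p t)))"
      using True by (simp add: Let_def nth_append)
    also have "\<dots> = x ^ (length cs - t) * chain_coeff A (Suc n) (drop t cs)"
    proof (cases "t < length cs")
      case False
      with Suc.prems have "t = length cs" by simp
      then show ?thesis using u xi Suc.prems by simp
    next
      case t: True
      define c where "c = cs ! t"
      have c: "c \<in> {1..M}" using cs t nth_mem by (force simp: c_def)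
      have drop: "drop t cs = c # drop (Suc t) cs" using t by (simp add: c_def Cons_nth_drop_Suc)
      have "(\<Sum>i=1..n. A (Suc n) i * xi i (p t) (?y i) * (?y i (pr (p t)) - ?y i (p t)))
          = (\<Sum>i=1..n. if i = c then A (Suc n) c * x * (?y c (p (Suc t)) - ?y c (p t)) else 0)"
        using Suc.prems t by (intro sum.cong) (auto simp: xi c_def pr)
      also have "\<dots> = (if c \<le> n then A (Suc n) c * x * (?y c (p (Suc t)) - ?y c (p t)) else 0)"
        using c by simp
      also have "\<dots> = x ^ (length cs - t) * chain_coeff A (Suc n) (drop t cs)"
      proof (cases "c \<le> n")
        case True
        have "?y c (p t) = 0" and "?y c (p (Suc t)) = x ^ (length cs - Suc t) * chain_coeff A c (drop (Suc t) cs)"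
          using Suc c t True by (simp_all add: drop)
        moreover have "x ^ (length cs - t) = x * x ^ (length cs - Suc t)"
          using t by (metis Suc_diff_Suc power_Suc)
        ultimately show ?thesis using True by (simp add: drop)
      qed (simp add: drop)
      finally show ?thesis using u t by simp
    qed
    finally show ?thesis using True by simp
  qed
qed

lemma rk_stages_extended_tableau:
  "n \<le> m \<Longrightarrow> rk_stages (rk_extended_tableau m A b) pr xi u n = rk_stages A pr xi u n"
  by (induction n) (simp_all add: Let_def rk_extended_tableau_def)

lemma rk_step_eq_last_stage:
  "rk_step m A b pr xi u = rk_stages (rk_extended_tableau m A b) pr xi u (Suc m) ! m"
  by (simp add: rk_step_def Let_def nth_append rk_stages_extended_tableau rk_extended_tableau_def)

lemma rk_step_along_path:
  fixes p :: "nat \<Rightarrow> 'g" and cs :: "nat list"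
  assumes "\<And>j t Y. j \<in> {1..m} \<Longrightarrow> t \<le> length cs \<Longrightarrow>
                  xi j (p t) Y = (if t < length cs \<and> j = cs ! t then x else 0)"
    and "set cs \<subseteq> {1..m}"
    and "\<And>t. t < length cs \<Longrightarrow> pr (p t) = p (Suc t)"
    and "\<And>t. t \<le> length cs \<Longrightarrow> u (p t) = (if t = length cs then 1 else 0)"
  shows "rk_step m A b pr xi u (p 0) = x ^ length cs * chain_coeff (rk_extended_tableau m A b) (Suc m) cs"
  using rk_stages_along_path[OF assms, of "Suc m" "Suc m" 0 "rk_extended_tableau m A b"]
  by (simp add: rk_step_eq_last_stage)

lemma rk_explicit_nonzero_imp_less:
  "rk_explicit m A \<Longrightarrow> i \<in> {1..m} \<Longrightarrow> j \<in> {1..m} \<Longrightarrow> A i j \<noteq> 0 \<Longrightarrow> j < i"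
  by (meson not_less rk_explicit_def)

lemma DJ_irreducible_stages_reachable:
  assumes explicit: "rk_explicit m A" and irreducible: "DJ_irreducible m A b"
    and j: "j \<in> {1..m}"
  shows "\<exists>cs. set cs \<subseteq> {1..m} \<and> chain_coeff (rk_extended_tableau m A b) (Suc m) (cs @ [j]) \<noteq> 0"
proof -
  let ?T = "rk_extended_tableau m A b"
  define R where "R = {j \<in> {1..m}. \<exists>cs. set cs \<subseteq> {1..m} \<and> chain_coeff ?T (Suc m) (cs @ [j]) \<noteq> 0}"
  define S where "S = {1..m} - R"
  have "\<forall>j\<in>S. b j = 0"
  proof
    fix j assume "j \<in> S"
    moreover have "set [] \<subseteq> {1..m}" by simp
    ultimately have "chain_coeff ?T (Suc m) ([] @ [j]) = 0" unfolding S_def R_def by blast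
    with \<open>j \<in> S\<close> show "b j = 0" by (auto simp: S_def rk_extended_tableau_def)
  qed
  moreover have "A i j = 0" if i: "i \<in> {1..m} - S" and "j \<in> S" for i j
  proof (rule ccontr)
    assume "A i j \<noteq> 0"
    with explicit i \<open>j \<in> S\<close> have "j < i" by (auto simp: S_def intro: rk_explicit_nonzero_imp_less)
    from i obtain cs where cs: "set cs \<subseteq> {1..m}" "chain_coeff ?T (Suc m) (cs @ [i]) \<noteq> 0"
      by (auto simp: S_def R_def)
    have "chain_coeff ?T (Suc m) ((cs @ [i]) @ [j]) = chain_coeff ?T (Suc m) (cs @ [i]) * A i j"
      unfolding chain_coeff_snoc[of ?T _ "cs @ [i]"] using \<open>j < i\<close> i by (simp add: rk_extended_tableau_def)
    with cs i \<open>A i j \<noteq> 0\<close> have "j \<in> R"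
      using \<open>j \<in> S\<close> by (auto simp: R_def S_def intro!: exI[of _ "cs @ [i]"])
    with \<open>j \<in> S\<close> show False by (simp add: S_def)
  qed
  ultimately have "S = {}"
    using irreducible by (auto simp: DJ_irreducible_def DJ_reducible_def S_def)
  with j show ?thesis by (auto simp: S_def R_def)
qed

lemma negative_chain_coeff:
  assumes explicit: "rk_explicit m A" and irreducible: "DJ_irreducible m A b"
    and negative: "(\<exists>i\<in>{1..m}. \<exists>j\<in>{1..m}. A i j < 0) \<or> (\<exists>j\<in>{1..m}. b j < 0)"
  shows "\<exists>cs. set cs \<subseteq> {1..m} \<and> chain_coeff (rk_extended_tableau m A b) (Suc m) cs < 0"
  using negative
proof
  let ?T = "rk_extended_tableau m A b"
  assume "\<exists>i\<in>{1..m}. \<exists>j\<in>{1..m}. A i j < 0"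
  then obtain i j where ij: "i \<in> {1..m}" "j \<in> {1..m}" "A i j < 0" by blast
  with explicit have "j < i" by (auto intro: rk_explicit_nonzero_imp_less)
  obtain cs where cs: "set cs \<subseteq> {1..m}" "chain_coeff ?T (Suc m) (cs @ [i]) \<noteq> 0"
    using DJ_irreducible_stages_reachable[OF explicit irreducible ij(1)] by blast
  have "chain_coeff ?T (Suc m) ((cs @ [i]) @ [j]) = chain_coeff ?T (Suc m) (cs @ [i]) * A i j"
    unfolding chain_coeff_snoc[of ?T _ "cs @ [i]"] using \<open>j < i\<close> ij by (simp add: rk_extended_tableau_def)
  then have "chain_coeff ?T (Suc m) (cs @ [i]) < 0 \<or> chain_coeff ?T (Suc m) ((cs @ [i]) @ [j]) < 0"
    using cs(2) ij(3) by (auto simp: mult_pos_neg linorder_neq_iff)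
  moreover have "set (cs @ [i]) \<subseteq> {1..m}" "set ((cs @ [i]) @ [j]) \<subseteq> {1..m}"
    using cs(1) ij by auto
  ultimately show ?thesis by blast
next
  assume "\<exists>j\<in>{1..m}. b j < 0"
  then obtain j where "j \<in> {1..m}" "b j < 0" by blast
  then show ?thesis
    by (intro exI[of _ "[j]"]) (simp add: rk_extended_tableau_def)
qed

lemma ode_rk_step_negative:
  assumes non_confluent: "rk_non_confluent m A" and cs: "set cs \<subseteq> {1..m}"
    and negative: "chain_coeff (rk_extended_tableau m A b) (Suc m) cs < 0"
  shows "\<exists>N dx dt tn q u. N \<ge> 1 \<and> dx > 0 \<and> dt > 0 \<and>
            (\<forall>k\<in>{1..N}. u k \<ge> 0) \<and> (\<forall>k v t. q k v t \<ge> 0) \<and>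
            (\<exists>k\<in>{1..N}. ode_rk_step m A b N dx dt tn q u k < 0)"
proof -
  define n where "n = length cs"
  define p where "p t = Suc n - t" for t
  define q where "q k (v :: nat \<Rightarrow> real) s =
    (if 1 < k \<and> k \<le> Suc n \<and> s = rk_nodes m A (cs ! (Suc n - k)) then 1 else 0 :: real)" for k v s
  define u where "u k = (if k = 1 then 1 else 0 :: real)" for k :: nat
  have "ode_rk_step m A b (Suc n) 1 1 0 q u (p 0) = 1 ^ n * chain_coeff (rk_extended_tableau m A b) (Suc m) cs"
    unfolding ode_rk_step_def n_def
  proof (rule rk_step_along_path[OF _ cs])
    fix j t and Y :: "nat \<Rightarrow> real"
    assume j: "j \<in> {1..m}" and t: "t \<le> length cs"
    have "rk_nodes m A j = rk_nodes m A (cs ! t) \<longleftrightarrow> j = cs ! t" if "t < length cs"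
      using non_confluent j cs nth_mem[OF that] by (auto simp: rk_non_confluent_def dest: inj_onD)
    with t show "1 / 1 * q (p t) (\<lambda>i. if i \<in> {1..Suc (length cs)} then Y i else 0) (0 + rk_nodes m A j * 1)
        = (if t < length cs \<and> j = cs ! t then 1 else 0)"
      by (auto simp: q_def p_def n_def Suc_diff_le)
  qed (auto simp: p_def u_def per_prev_def n_def)
  with negative have "ode_rk_step m A b (Suc n) 1 1 0 q u (p 0) < 0" by simp
  moreover have "p 0 \<in> {1..Suc n}" by (simp add: p_def)
  ultimately show ?thesis
    by (intro exI[of _ "Suc n"] exI[of _ "1::real"] exI[of _ "0::real"] exI[of _ q] exI[of _ u])
      (auto simp: q_def u_def)
qed

lemma chain_coeff_nonzero_length_le:
  assumes "set cs \<subseteq> {1..m}" and "chain_coeff A j cs \<noteq> 0"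
  shows "length cs \<le> m"
proof -
  have "length cs = card (set cs)"
    using chain_coeffD[OF assms(2)] by (simp add: distinct_card)
  also have "\<dots> \<le> card {1..m}" using assms(1) by (intro card_mono) auto
  finally show ?thesis by simp
qed

lemma rk_gamma_set_subset_zero:
  assumes cs: "set cs \<subseteq> {1..m}"
    and negative: "chain_coeff (rk_extended_tableau m A b) (Suc m) cs < 0"
  shows "rk_gamma_set m A b \<subseteq> {0}"
proof
  fix \<delta> assume \<delta>: "\<delta> \<in> rk_gamma_set m A b"
  show "\<delta> \<in> {0}"
  proof (rule ccontr)
    assume "\<delta> \<notin> {0}"
    with \<delta> have "\<delta> > 0" by (auto simp: rk_gamma_set_def)
    define \<xi> where "\<xi> j l = (if l \<le> 0 \<and> nat (- l) < length cs \<and> j = cs ! nat (- l) then \<delta> else 0)"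
      for j and l :: int
    have "rk_P m A b (length cs) \<xi> = \<delta> ^ length cs * chain_coeff (rk_extended_tableau m A b) (Suc m) cs"
      unfolding rk_P_def
      using rk_step_along_path[OF _ cs, where p="\<lambda>t. - int t" and xi="\<lambda>j l Y. \<xi> j l" and x=\<delta>
        and pr="\<lambda>l. l - 1" and u="\<lambda>l. if l = - int (length cs) then 1 else 0"]
      by (simp add: \<xi>_def)
    also have "\<dots> < 0" using negative \<open>\<delta> > 0\<close> by (simp add: mult_pos_neg)
    finally have "rk_P m A b (length cs) \<xi> < 0" .
    have "length cs \<le> m"
      using chain_coeff_nonzero_length_le cs negative by (metis less_irrefl)
    moreover have "0 \<le> \<xi> j l \<and> \<xi> j l \<le> \<delta>" for j l
      using \<open>\<delta> > 0\<close> by (simp add: \<xi>_def)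
    ultimately have "rk_P m A b (length cs) \<xi> \<ge> 0"
      using \<delta> unfolding rk_gamma_set_def by blast
    with \<open>rk_P m A b (length cs) \<xi> < 0\<close> show False by simp
  qed
qed

lemma rk_gamma_eq_zero: "rk_gamma_set m A b \<subseteq> {0} \<Longrightarrow> rk_gamma m A b = 0"
  by (cases "rk_gamma_set m A b = {}") (auto simp: rk_gamma_def subset_singleton_iff zero_ereal_def)

theorem theorem3:
  fixes m :: nat and A :: "nat \<Rightarrow> nat \<Rightarrow> real" and b :: "nat \<Rightarrow> real"
  assumes "rk_explicit m A"
    and "rk_non_confluent m A"
    and "DJ_irreducible m A b"
    and "(\<exists>i\<in>{1..m}. \<exists>j\<in>{1..m}. A i j < 0) \<or> (\<exists>j\<in>{1..m}. b j < 0)"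
  shows "(\<exists>N dx dt tn q u. N \<ge> 1 \<and> dx > 0 \<and> dt > 0 \<and>
            (\<forall>k\<in>{1..N}. u k \<ge> 0) \<and> (\<forall>k v t. q k v t \<ge> 0) \<and>
            (\<exists>k\<in>{1..N}. ode_rk_step m A b N dx dt tn q u k < 0))
         \<and> rk_gamma m A b = 0"
proof -
  obtain cs where "set cs \<subseteq> {1..m}" and "chain_coeff (rk_extended_tableau m A b) (Suc m) cs < 0"
    using negative_chain_coeff[OF assms(1,3,4)] by blast
  then show ?thesis
    using ode_rk_step_negative[OF assms(2)] rk_gamma_eq_zero[OF rk_gamma_set_subset_zero] by blast
qed

end
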